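(* Let $\Omega\subset\mathbb{R}^N$ be a bounded open connected set, $F:\Omega\times\mathbb{R}\times\mathcal{S}(N)\to\mathbb{R}$ continuous with $\{(r,A):F(x,r,A)=0\}\neq\emptyset$ for each $x\in\Omega$, and let $\Phi$ be either a Hausdorff continuous proper elliptic map on $\Omega$ (constrained case) or $\Phi(x)=\mathbb{R}\times\mathcal{S}(N)$ for all $x$ (unconstrained case). Suppose $\Theta(x):=\{(r,A)\in\Phi(x):F(x,r,A)\ge0\}$ is a proper elliptic map. Assume that for every open $\Omega'\subset\subset\Omega$ and every $\eta>0$ there exists $\delta=\delta(\eta,\Omega')>0$ such that $F(y,r-\eta,A+\eta I)\ge F(x,r,A)$ for all $x,y\in\Omega'$ with $|x-y|<\delta$ and all $(r,A)\in\Phi(x)$. Then $\Theta$ is Hausdorff continuous on $\Omega$.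
   Context: $\mathcal{S}(N)$: real symmetric $N\times N$ matrices with the usual partial order, eigenvalues $\lambda_i(A)$, identity $I$. $\mathcal{Q}:=\{(s,P): s\le0,\ P\ge0\}$. A proper elliptic map assigns to each $x\in\Omega$ a closed, nonempty set $\subsetneq\mathbb{R}\times\mathcal{S}(N)$ invariant under adding elements of $\mathcal Q$. With the norm $\|(r,A)\|=\max\{|r|,\max_i|\lambda_i(A)|\}$ and the Hausdorff distance $d_{\mathcal H}$ between closed subsets (possibly $+\infty$), a map $\Theta$ is Hausdorff continuous on $\Omega$ if for all $x\in\Omega$ and $\eta>0$ there is $\delta>0$ with $d_{\mathcal H}(\Theta(x),\Theta(y))<\eta$ whenever $y\in\Omega$, $|x-y|<\delta$. *)

theory Defs
  imports "HOL-Analysis.Analysis"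
begin

text \<open>Real symmetric N x N matrices, N = CARD('n).\<close>
definition Sym :: "(real^'n^'n) set" where
  "Sym = {A. transpose A = A}"

definition psd :: "real^'n^'n \<Rightarrow> bool" where
  "psd P \<longleftrightarrow> P \<in> Sym \<and> (\<forall>v. 0 \<le> v \<bullet> (P *v v))"

definition eigvals :: "real^'n^'n \<Rightarrow> real set" where
  "eigvals A = {c. \<exists>v. v \<noteq> 0 \<and> A *v v = c *\<^sub>R v}"

definition maxabs_eig :: "real^'n^'n \<Rightarrow> real" where
  "maxabs_eig A = Sup (abs ` eigvals A)"

definition pnorm :: "real \<times> (real^'n^'n) \<Rightarrow> real" where
  "pnorm p = max \<bar>fst p\<bar> (maxabs_eig (snd p))"

definition hdist :: "(real \<times> (real^'n^'n)) set \<Rightarrow> (real \<times> (real^'n^'n)) set \<Rightarrow> ereal" where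
  "hdist X Y = max (SUP a\<in>X. INF b\<in>Y. ereal (pnorm (a - b)))
                   (SUP b\<in>Y. INF a\<in>X. ereal (pnorm (a - b)))"

definition proper_elliptic :: "(real^'n) set \<Rightarrow> (real^'n \<Rightarrow> (real \<times> (real^'n^'n)) set) \<Rightarrow> bool" where
  "proper_elliptic \<Omega> \<Theta> \<longleftrightarrow>
     (\<forall>x\<in>\<Omega>. \<Theta> x \<subseteq> UNIV \<times> Sym \<and> closed (\<Theta> x) \<and> \<Theta> x \<noteq> {} \<and> \<Theta> x \<noteq> UNIV \<times> Sym \<and>
        (\<forall>r A s P. (r, A) \<in> \<Theta> x \<and> s \<le> 0 \<and> psd P \<longrightarrow> (r + s, A + P) \<in> \<Theta> x))"

definition hausdorff_continuous :: "(real^'n) set \<Rightarrow> (real^'n \<Rightarrow> (real \<times> (real^'n^'n)) set) \<Rightarrow> bool" where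
  "hausdorff_continuous \<Omega> \<Theta> \<longleftrightarrow>
     (\<forall>x\<in>\<Omega>. \<forall>\<eta>>0. \<exists>\<delta>>0. \<forall>y\<in>\<Omega>. dist x y < \<delta> \<longrightarrow> hdist (\<Theta> x) (\<Theta> y) < ereal \<eta>)"

definition compactly_contained :: "'a::metric_space set \<Rightarrow> 'a set \<Rightarrow> bool" where
  "compactly_contained U V \<longleftrightarrow> compact (closure U) \<and> closure U \<subseteq> V"

end

theory Submission
  imports Defs
begin

text \<open>Shifting \<open>(r, A)\<close> to \<open>(r - h, A + h I)\<close> moves it by exactly \<open>h\<close> in the norm.
  By ellipticity every point within distance \<open>h\<close> of \<open>\<Phi>(y)\<close> shifts into \<open>\<Phi>(y)\<close>, since
  a symmetric matrix whose eigenvalues have modulus at most \<open>h\<close> becomes positive semidefinite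
  after adding \<open>h I\<close>; so Hausdorff continuity of \<open>\<Phi>\<close> lets \<open>\<Phi>(x)\<close> and \<open>\<Phi>(y)\<close> shift into
  each other for nearby \<open>x, y\<close>. The structural hypothesis on \<open>F\<close> says that the shift also
  preserves \<open>F \<ge> 0\<close> when passing from \<open>x\<close> to \<open>y\<close>, hence \<open>\<Theta>(x)\<close> and \<open>\<Theta>(y)\<close> shift into each
  other and are at Hausdorff distance at most \<open>h\<close>.\<close>

lemma Sym_add: "A \<in> Sym \<Longrightarrow> B \<in> Sym \<Longrightarrow> A + B \<in> Sym"
  by (simp add: Sym_def transpose_def vec_eq_iff)

lemma Sym_diff: "A \<in> Sym \<Longrightarrow> B \<in> Sym \<Longrightarrow> A - B \<in> Sym"
  by (simp add: Sym_def transpose_def vec_eq_iff)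

lemma scaleR_mat_1_in_Sym: "c *\<^sub>R mat 1 \<in> Sym"
  by (simp add: Sym_def transpose_scalar)

lemma Sym_inner_commute:
  assumes "M \<in> Sym"
  shows "v \<bullet> (M *v w) = w \<bullet> (M *v v)"
proof -
  have "v \<bullet> (M *v w) = (transpose M *v v) \<bullet> w" by (simp add: dot_lmul_matrix)
  also have "transpose M = M" using assms by (simp add: Sym_def)
  finally show ?thesis by (simp add: inner_commute)
qed

lemma psd_add: "psd P \<Longrightarrow> psd Q \<Longrightarrow> psd (P + Q)"
  by (simp add: psd_def Sym_add matrix_vector_mult_add_rdistrib inner_add_right)

lemma psd_scaleR_mat_1: "0 \<le> c \<Longrightarrow> psd (c *\<^sub>R mat 1)"
  by (simp add: psd_def scaleR_mat_1_in_Sym flip: scaleR_matrix_vector_assoc)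

lemma psd_inner_eq_0_imp_mult_eq_0:
  assumes P: "psd P" and v: "v \<bullet> (P *v v) = 0"
  shows "P *v v = 0"
proof (rule ccontr)
  define w where "w = P *v v"
  define C where "C = w \<bullet> (P *v w)"
  assume "P *v v \<noteq> 0"
  then have w_pos: "w \<bullet> w > 0" by (simp add: w_def)
  have C_nonneg: "C \<ge> 0" using P by (simp add: psd_def C_def)
  have expand: "(v - s *\<^sub>R w) \<bullet> (P *v (v - s *\<^sub>R w)) = - 2 * s * (w \<bullet> w) + s\<^sup>2 * C" for s
    using Sym_inner_commute[of P v w] P v
    by (simp add: psd_def w_def C_def algebra_simps power2_eq_square)
  define s where "s = (w \<bullet> w) / (C + 1)"
  have s_pos: "s > 0" using w_pos C_nonneg by (simp add: s_def)
  \<comment> \<open>the form vanishes at \<open>v\<close>, and moving along \<open>-P v\<close> would make it negative to first order\<close>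
  have "0 \<le> (v - s *\<^sub>R w) \<bullet> (P *v (v - s *\<^sub>R w))" using P by (simp add: psd_def)
  then have "0 \<le> - 2 * s * (w \<bullet> w) + s\<^sup>2 * C" by (simp only: expand)
  then have "2 * (w \<bullet> w) \<le> s * C" using s_pos by (simp add: power2_eq_square algebra_simps)
  moreover have "s * C < w \<bullet> w" using w_pos C_nonneg by (simp add: s_def field_simps)
  ultimately show False using w_pos by linarith
qed

lemma Sym_has_min_eigenvalue:
  fixes M :: "real^'n^'n"
  assumes M: "M \<in> Sym"
  shows "\<exists>l\<in>eigvals M. psd (M - l *\<^sub>R mat 1)"
proof -
  \<comment> \<open>\<open>l\<close> is the minimum of the form on the unit sphere; a minimiser lies in the kernel of the
    positive semidefinite \<open>M - l I\<close> and is therefore an eigenvector\<close>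
  let ?q = "\<lambda>v::real^'n. v \<bullet> (M *v v)"
  have "continuous_on (sphere 0 1) ?q"
    by (intro continuous_intros
        continuous_on_compose2[OF linear_continuous_on[OF matrix_vector_mul_bounded_linear]]) auto
  moreover have "sphere (0::real^'n) 1 \<noteq> {}" by simp
  ultimately obtain v0 where v0: "v0 \<in> sphere 0 1" and min: "\<And>v. v \<in> sphere 0 1 \<Longrightarrow> ?q v0 \<le> ?q v"
    using continuous_attains_inf[OF compact_sphere] by blast
  define l where "l = ?q v0"
  have form: "v \<bullet> ((M - l *\<^sub>R mat 1) *v v) = ?q v - l * (v \<bullet> v)" for v
    by (simp add: matrix_vector_mult_diff_rdistrib inner_diff_right flip: scaleR_matrix_vector_assoc)
  have "l * (u \<bullet> u) \<le> ?q u" for u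
  proof (cases "u = 0")
    case False
    then have "(1 / norm u) *\<^sub>R u \<in> sphere 0 1" by simp
    then have "l \<le> ?q ((1 / norm u) *\<^sub>R u)" using min by (simp only: l_def)
    also have "\<dots> = ?q u / (norm u)\<^sup>2"
      by (simp add: matrix_vector_mult_scaleR power2_eq_square)
    finally show ?thesis using False by (simp add: pos_le_divide_eq power2_norm_eq_inner mult.commute)
  qed simp
  then have psd: "psd (M - l *\<^sub>R mat 1)"
    using M by (simp add: psd_def form Sym_diff scaleR_mat_1_in_Sym)
  have "v0 \<bullet> v0 = 1" using v0 by (simp add: dot_square_norm)
  then have "v0 \<bullet> ((M - l *\<^sub>R mat 1) *v v0) = 0" unfolding form by (simp add: l_def)
  then have "(M - l *\<^sub>R mat 1) *v v0 = 0" using psd psd_inner_eq_0_imp_mult_eq_0 by blast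
  then have "M *v v0 = l *\<^sub>R v0"
    by (simp add: matrix_vector_mult_diff_rdistrib flip: scaleR_matrix_vector_assoc)
  moreover have "v0 \<noteq> 0" using v0 by auto
  ultimately show ?thesis using psd unfolding eigvals_def by blast
qed

lemma abs_eigenvalue_le_maxabs_eig:
  fixes M :: "real^'n^'n"
  assumes "c \<in> eigvals M"
  shows "\<bar>c\<bar> \<le> maxabs_eig M"
proof -
  obtain K where K: "\<And>x. norm (M *v x) \<le> norm x * K"
    using bounded_linear.bounded[OF matrix_vector_mul_bounded_linear] by blast
  have "\<bar>c'\<bar> \<le> K" if "c' \<in> eigvals M" for c'
  proof -
    from that obtain v where "v \<noteq> 0" "M *v v = c' *\<^sub>R v" unfolding eigvals_def by blast
    then show ?thesis using K[of v] by (simp add: mult.commute)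
  qed
  then have "bdd_above (abs ` eigvals M)" by (auto intro!: bdd_aboveI[where M=K])
  then show ?thesis unfolding maxabs_eig_def using assms by (auto intro: cSup_upper)
qed

lemma psd_add_maxabs_eig:
  fixes M :: "real^'n^'n"
  assumes "M \<in> Sym" "maxabs_eig M \<le> c"
  shows "psd (M + c *\<^sub>R mat 1)"
proof -
  obtain l where l: "l \<in> eigvals M" "psd (M - l *\<^sub>R mat 1)"
    using Sym_has_min_eigenvalue[OF assms(1)] by blast
  have "0 \<le> l + c" using abs_eigenvalue_le_maxabs_eig[OF l(1)] assms(2) by linarith
  then have "psd ((M - l *\<^sub>R mat 1) + (l + c) *\<^sub>R mat 1)"
    using l(2) by (intro psd_add psd_scaleR_mat_1)
  then show ?thesis by (simp add: algebra_simps)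
qed

lemma eigvals_uminus: "eigvals (- M) = uminus ` eigvals (M::real^'n^'n)"
proof -
  have "(- M) *v v = - (M *v v)" for v
    by (simp add: matrix_vector_mult_def vec_eq_iff sum_negf)
  then have "c \<in> eigvals (- M) \<longleftrightarrow> - c \<in> eigvals M" for c
    by (simp add: eigvals_def) (metis minus_minus scaleR_minus_left)
  then show ?thesis by (force simp: image_iff)
qed

lemma maxabs_eig_uminus: "maxabs_eig (- M) = maxabs_eig (M::real^'n^'n)"
  unfolding maxabs_eig_def eigvals_uminus image_image by simp

lemma eigvals_scaleR_mat_1: "eigvals (c *\<^sub>R (mat 1 :: real^'n^'n)) = {c}"
proof -
  have "(1::real^'n) \<noteq> 0" by (simp add: vec_eq_iff)
  then show ?thesis
    by (auto simp: eigvals_def scaleR_matrix_vector_assoc[symmetric] scaleR_cancel_right)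
qed

lemma pnorm_scaleR_mat_1: "pnorm (s, c *\<^sub>R (mat 1 :: real^'n^'n)) = max \<bar>s\<bar> \<bar>c\<bar>"
  by (simp add: pnorm_def maxabs_eig_def eigvals_scaleR_mat_1)

lemma pnorm_minus_commute: "pnorm (a - b) = pnorm (b - a)"
proof -
  have "maxabs_eig (snd a - snd b) = maxabs_eig (snd b - snd a)"
    using maxabs_eig_uminus[of "snd b - snd a"] by simp
  then show ?thesis by (simp add: pnorm_def abs_minus_commute)
qed

lemma hdist_commute: "hdist X Y = hdist Y X"
  unfolding hdist_def by (simp add: pnorm_minus_commute max.commute)

lemma hdist_less_imp_near:
  assumes "hdist X Y < ereal h" "a \<in> X"
  shows "\<exists>b\<in>Y. pnorm (a - b) < h"
proof -
  have "(INF b\<in>Y. ereal (pnorm (a - b))) \<le> hdist X Y"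
    unfolding hdist_def using assms(2) by (meson SUP_upper max.cobounded1 order_trans)
  also have "\<dots> < ereal h" by (fact assms(1))
  finally show ?thesis by (simp add: INF_less_iff)
qed

definition shifts_into :: "real \<Rightarrow> (real \<times> (real^'n^'n)) set \<Rightarrow> (real \<times> (real^'n^'n)) set \<Rightarrow> bool" where
  "shifts_into h X Y \<longleftrightarrow> (\<forall>(r, A)\<in>X. (r - h, A + h *\<^sub>R mat 1) \<in> Y)"

lemma hdist_le_if_shifts_into:
  assumes "0 \<le> h" "shifts_into h X Y" "shifts_into h Y X"
  shows "hdist X Y \<le> ereal h"
proof -
  have excess: "(SUP a\<in>X. INF b\<in>Y. ereal (pnorm (a - b))) \<le> ereal h"
    if "shifts_into h X Y" for X Y :: "(real \<times> (real^'n^'n)) set"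
  proof (rule SUP_least)
    fix a assume "a \<in> X"
    obtain r A where a: "a = (r, A)" by fastforce
    have "(r - h, A + h *\<^sub>R mat 1) \<in> Y" using that \<open>a \<in> X\<close> by (auto simp: shifts_into_def a)
    moreover have "pnorm (a - (r - h, A + h *\<^sub>R mat 1)) = h"
      using pnorm_scaleR_mat_1[of h "- h"] assms(1) by (simp add: a)
    ultimately show "(INF b\<in>Y. ereal (pnorm (a - b))) \<le> ereal h" by (metis INF_lower)
  qed
  have "(SUP b\<in>Y. INF a\<in>X. ereal (pnorm (a - b))) = (SUP b\<in>Y. INF a\<in>X. ereal (pnorm (b - a)))"
    by (simp only: pnorm_minus_commute)
  then show ?thesis
    unfolding hdist_def using excess[OF assms(2)] excess[OF assms(3)] by simp
qed

lemma proper_elliptic_shift_near: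
  assumes pe: "proper_elliptic \<Omega> \<Phi>" and y: "y \<in> \<Omega>" and b: "b \<in> \<Phi> y"
    and A: "A \<in> Sym" and near: "pnorm ((r, A) - b) \<le> h"
  shows "(r - h, A + h *\<^sub>R mat 1) \<in> \<Phi> y"
proof -
  obtain r' A' where b_eq: "b = (r', A')" by fastforce
  have "A' \<in> Sym" using pe y b b_eq unfolding proper_elliptic_def by blast
  have "\<bar>r - r'\<bar> \<le> h" "maxabs_eig (A - A') \<le> h"
    using near by (auto simp: pnorm_def b_eq)
  then have "r - r' - h \<le> 0" "psd (A - A' + h *\<^sub>R mat 1)"
    using psd_add_maxabs_eig Sym_diff[OF A \<open>A' \<in> Sym\<close>] by auto
  then have "(r' + (r - r' - h), A' + (A - A' + h *\<^sub>R mat 1)) \<in> \<Phi> y"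
    using pe y b b_eq unfolding proper_elliptic_def by blast
  then show ?thesis by (simp add: algebra_simps)
qed

lemma hdist_less_imp_shifts_into:
  assumes pe: "proper_elliptic \<Omega> \<Phi>" and "x \<in> \<Omega>" "y \<in> \<Omega>" and "hdist (\<Phi> x) (\<Phi> y) < ereal h"
  shows "shifts_into h (\<Phi> x) (\<Phi> y)"
  unfolding shifts_into_def
proof (intro ballI, clarify)
  fix r A assume a: "(r, A) \<in> \<Phi> x"
  then have "A \<in> Sym" using pe \<open>x \<in> \<Omega>\<close> unfolding proper_elliptic_def by blast
  obtain b where "b \<in> \<Phi> y" "pnorm ((r, A) - b) < h"
    using hdist_less_imp_near[OF assms(4) a] by blast
  then show "(r - h, A + h *\<^sub>R mat 1) \<in> \<Phi> y"
    using proper_elliptic_shift_near[OF pe \<open>y \<in> \<Omega>\<close>] \<open>A \<in> Sym\<close> by (meson less_imp_le)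
qed

lemma hausdorff_continuous_shifts_into:
  assumes pe: "proper_elliptic \<Omega> \<Phi>" and "hausdorff_continuous \<Omega> \<Phi>" "x \<in> \<Omega>" "0 < h"
  shows "\<exists>d>0. \<forall>y\<in>\<Omega>. dist x y < d \<longrightarrow> shifts_into h (\<Phi> x) (\<Phi> y) \<and> shifts_into h (\<Phi> y) (\<Phi> x)"
proof -
  obtain d where "d > 0" and d: "\<And>y. y \<in> \<Omega> \<Longrightarrow> dist x y < d \<Longrightarrow> hdist (\<Phi> x) (\<Phi> y) < ereal h"
    using assms(2-4) unfolding hausdorff_continuous_def by blast
  have "shifts_into h (\<Phi> x) (\<Phi> y) \<and> shifts_into h (\<Phi> y) (\<Phi> x)" if "y \<in> \<Omega>" "dist x y < d" for y
  proof
    show "shifts_into h (\<Phi> x) (\<Phi> y)"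
      using hdist_less_imp_shifts_into[OF pe \<open>x \<in> \<Omega>\<close> \<open>y \<in> \<Omega>\<close> d[OF that]] .
    have "hdist (\<Phi> y) (\<Phi> x) < ereal h" using d[OF that] hdist_commute by metis
    then show "shifts_into h (\<Phi> y) (\<Phi> x)"
      using hdist_less_imp_shifts_into[OF pe \<open>y \<in> \<Omega>\<close> \<open>x \<in> \<Omega>\<close>] by blast
  qed
  then show ?thesis using \<open>d > 0\<close> by blast
qed

lemma shifts_into_superlevel:
  fixes f g :: "real \<Rightarrow> real^'n^'n \<Rightarrow> real"
  assumes "shifts_into h X Y"
    and "\<forall>(r, A)\<in>X. g (r - h) (A + h *\<^sub>R mat 1) \<ge> f r A"
  shows "shifts_into h {(r, A) \<in> X. f r A \<ge> 0} {(r, A) \<in> Y. g r A \<ge> 0}"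
proof -
  have "(r - h, A + h *\<^sub>R mat 1) \<in> {(r, A) \<in> Y. g r A \<ge> 0}"
    if a: "(r, A) \<in> X" "f r A \<ge> 0" for r A
  proof -
    have "f r A \<le> g (r - h) (A + h *\<^sub>R mat 1)" using assms(2) a(1) by blast
    moreover have "(r - h, A + h *\<^sub>R mat 1) \<in> Y"
      using assms(1) a(1) unfolding shifts_into_def by blast
    ultimately show ?thesis using a(2) by simp
  qed
  then show ?thesis unfolding shifts_into_def by blast
qed

lemma constraint_shifts_into_near:
  assumes "(proper_elliptic \<Omega> \<Phi> \<and> hausdorff_continuous \<Omega> \<Phi>) \<or> (\<forall>x. \<Phi> x = UNIV \<times> Sym)"
    and "x \<in> \<Omega>" "0 < h"
  shows "\<exists>d>0. \<forall>y\<in>\<Omega>. dist x y < d \<longrightarrow> shifts_into h (\<Phi> x) (\<Phi> y) \<and> shifts_into h (\<Phi> y) (\<Phi> x)"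
proof (cases "\<forall>x. \<Phi> x = UNIV \<times> Sym")
  case True
  then have "shifts_into h (\<Phi> y) (\<Phi> z)" for y z
    by (simp add: shifts_into_def Sym_add scaleR_mat_1_in_Sym)
  then show ?thesis by (intro exI[of _ 1]) simp
next
  case False
  then show ?thesis using assms hausdorff_continuous_shifts_into by blast
qed

lemma shift_condition_near:
  fixes F :: "'a::euclidean_space \<Rightarrow> real \<Rightarrow> real^'n^'n \<Rightarrow> real"
  assumes "open \<Omega>" "x \<in> \<Omega>" "0 < h"
    and "\<forall>\<Omega>'. open \<Omega>' \<and> compactly_contained \<Omega>' \<Omega> \<longrightarrow>
           (\<forall>\<eta>>0. \<exists>\<delta>>0. \<forall>x\<in>\<Omega>'. \<forall>y\<in>\<Omega>'. dist x y < \<delta> \<longrightarrow>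
              (\<forall>(r, A)\<in>\<Phi> x. F y (r - \<eta>) (A + \<eta> *\<^sub>R mat 1) \<ge> F x r A))"
  shows "\<exists>d>0. \<forall>y. dist x y < d \<longrightarrow>
           (\<forall>(r, A)\<in>\<Phi> x. F y (r - h) (A + h *\<^sub>R mat 1) \<ge> F x r A) \<and>
           (\<forall>(r, A)\<in>\<Phi> y. F x (r - h) (A + h *\<^sub>R mat 1) \<ge> F y r A)"
proof -
  obtain e where "e > 0" "cball x e \<subseteq> \<Omega>" using assms(1,2) open_contains_cball by blast
  moreover have "cball x (e/2) \<subseteq> cball x e" using \<open>e > 0\<close> by (simp add: subset_cball)
  ultimately have "open (ball x (e/2)) \<and> compactly_contained (ball x (e/2)) \<Omega>"
    by (simp add: compactly_contained_def closure_ball)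
  then obtain d where "d > 0" and d: "\<forall>x'\<in>ball x (e/2). \<forall>y'\<in>ball x (e/2). dist x' y' < d \<longrightarrow>
      (\<forall>(r, A)\<in>\<Phi> x'. F y' (r - h) (A + h *\<^sub>R mat 1) \<ge> F x' r A)"
    using assms(4)[rule_format, of "ball x (e/2)" h] \<open>0 < h\<close> by blast
  have x: "x \<in> ball x (e/2)" using \<open>e > 0\<close> by simp
  show ?thesis
  proof (intro exI[of _ "min d (e/2)"] conjI allI impI)
    fix y assume "dist x y < min d (e/2)"
    then have "y \<in> ball x (e/2)" "dist x y < d" "dist y x < d" by (auto simp: dist_commute)
    then show "\<forall>(r, A)\<in>\<Phi> x. F y (r - h) (A + h *\<^sub>R mat 1) \<ge> F x r A"
      "\<forall>(r, A)\<in>\<Phi> y. F x (r - h) (A + h *\<^sub>R mat 1) \<ge> F y r A"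
      using d x by blast+
  qed (use \<open>d > 0\<close> \<open>e > 0\<close> in simp)
qed

theorem theorem6p8:
  fixes \<Omega> :: "(real^'n) set"
    and F :: "real^'n \<Rightarrow> real \<Rightarrow> real^'n^'n \<Rightarrow> real"
    and \<Phi> :: "real^'n \<Rightarrow> (real \<times> (real^'n^'n)) set"
  assumes "bounded \<Omega>" "open \<Omega>" "connected \<Omega>"
    and "continuous_on (\<Omega> \<times> UNIV \<times> Sym) (\<lambda>(x, r, A). F x r A)"
    and "\<forall>x\<in>\<Omega>. \<exists>r A. A \<in> Sym \<and> F x r A = 0"
    and "(proper_elliptic \<Omega> \<Phi> \<and> hausdorff_continuous \<Omega> \<Phi>) \<or> (\<forall>x. \<Phi> x = UNIV \<times> Sym)"
    and "proper_elliptic \<Omega> (\<lambda>x. {(r, A) \<in> \<Phi> x. F x r A \<ge> 0})"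
    and "\<forall>\<Omega>'. open \<Omega>' \<and> compactly_contained \<Omega>' \<Omega> \<longrightarrow>
           (\<forall>\<eta>>0. \<exists>\<delta>>0. \<forall>x\<in>\<Omega>'. \<forall>y\<in>\<Omega>'. dist x y < \<delta> \<longrightarrow>
              (\<forall>(r, A)\<in>\<Phi> x. F y (r - \<eta>) (A + \<eta> *\<^sub>R mat 1) \<ge> F x r A))"
  shows "hausdorff_continuous \<Omega> (\<lambda>x. {(r, A) \<in> \<Phi> x. F x r A \<ge> 0})"
  unfolding hausdorff_continuous_def
proof (intro ballI allI impI)
  fix x \<eta> assume "x \<in> \<Omega>" and "(\<eta>::real) > 0"
  then have "\<eta> / 2 > 0" by simp
  obtain d1 where "d1 > 0" and \<Phi>_shift: "\<forall>y\<in>\<Omega>. dist x y < d1 \<longrightarrow>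
      shifts_into (\<eta> / 2) (\<Phi> x) (\<Phi> y) \<and> shifts_into (\<eta> / 2) (\<Phi> y) (\<Phi> x)"
    using constraint_shifts_into_near[OF assms(6) \<open>x \<in> \<Omega>\<close> \<open>\<eta> / 2 > 0\<close>] by blast
  obtain d2 where "d2 > 0" and F_shift: "\<forall>y. dist x y < d2 \<longrightarrow>
      (\<forall>(r, A)\<in>\<Phi> x. F y (r - \<eta> / 2) (A + (\<eta> / 2) *\<^sub>R mat 1) \<ge> F x r A) \<and>
      (\<forall>(r, A)\<in>\<Phi> y. F x (r - \<eta> / 2) (A + (\<eta> / 2) *\<^sub>R mat 1) \<ge> F y r A)"
    using shift_condition_near[OF assms(2) \<open>x \<in> \<Omega>\<close> \<open>\<eta> / 2 > 0\<close> assms(8)] by blast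
  have "hdist {(r, A) \<in> \<Phi> x. F x r A \<ge> 0} {(r, A) \<in> \<Phi> y. F y r A \<ge> 0} < ereal \<eta>"
    if "y \<in> \<Omega>" "dist x y < min d1 d2" for y
  proof -
    from that have "dist x y < d1" "dist x y < d2" by auto
    with \<Phi>_shift F_shift \<open>y \<in> \<Omega>\<close>
    have "shifts_into (\<eta> / 2) {(r, A) \<in> \<Phi> x. F x r A \<ge> 0} {(r, A) \<in> \<Phi> y. F y r A \<ge> 0}"
      "shifts_into (\<eta> / 2) {(r, A) \<in> \<Phi> y. F y r A \<ge> 0} {(r, A) \<in> \<Phi> x. F x r A \<ge> 0}"
      by (simp_all add: shifts_into_superlevel)
    then have "hdist {(r, A) \<in> \<Phi> x. F x r A \<ge> 0} {(r, A) \<in> \<Phi> y. F y r A \<ge> 0} \<le> ereal (\<eta> / 2)"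
      using \<open>\<eta> > 0\<close> by (simp add: hdist_le_if_shifts_into)
    then show ?thesis using \<open>\<eta> > 0\<close> by (simp add: order_le_less_trans)
  qed
  then show "\<exists>\<delta>>0. \<forall>y\<in>\<Omega>. dist x y < \<delta> \<longrightarrow>
      hdist {(r, A) \<in> \<Phi> x. F x r A \<ge> 0} {(r, A) \<in> \<Phi> y. F y r A \<ge> 0} < ereal \<eta>"
    using \<open>d1 > 0\<close> \<open>d2 > 0\<close> by (intro exI[of _ "min d1 d2"]) auto
qed

end
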